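(* Assume the setting below, fix $t>0$, $N\ge1$ and $(i,j)\in\mathcal I_N$. Every weak limit point (as $L\to\infty$ along multiples of $N$) of the sequence of probability measures $\{p_{L,t,(i,j)}\}_L$ on $\Omega$ is invariant under all translations of $\mathcal T$.
   Context: Lattices: $\mathcal T$ is the triangular lattice on $\mathbb Z^2$ ($u\sim u\pm\hat e_i$, $\hat e_1=(1,0)$, $\hat e_2=(0,1)$, $\hat e_3=(-1,-1)$; $\hat e_3$ vertical), $\mathcal H$ its dual honeycomb lattice; $b_i(u)$ is the edge of $\mathcal H$ crossed by the $\mathcal T$-edge from $u$ to $u+\hat e_i$ (type $i$; type-3 dimers are "particles"); $\mathcal H_L,\mathcal T_L$ are quotients by $L\mathbb Z^2$. $\mathbb T$ is the open triangle with vertices $(0,0),(1,0),(0,1)$. $\Omega_{\bar\rho^{(L)}}$ ($\bar\rho^{(L)}\in\mathbb T$, $L\bar\rho^{(L)}_i\in\mathbb N$) is the set of perfect matchings of $\mathcal H_L$ with $L^2\bar\rho^{(L)}_i$ dimers of type $i=1,2$. Dynamics: a particle at $b_3(v)$ moved by $\pm n\hat e_3$ goes to $b_3(v\pm n\hat e_3)$ (other particles fixed); $I^\pm(p)$ is the largest $m\ge0$ such that moving particle $p$ by $\pm n\hat e_3$ gives a configuration of $\Omega_{\bar\rho^{(L)}}$ for all $1\le n\le m$; the Markov chain $\eta(t)$ on $\Omega_{\bar\rho^{(L)}}$ moves $p$ by $\pm n\hat e_3$, $1\le n\le I^\pm(p)$, at rate $L^2/(2n)$, started from $\eta_0\in\Omega_{\bar\rho^{(L)}}$;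 $\mathbb E$ its expectation. Standing assumption: $\bar\rho^{(L)}\to\bar\rho\in\mathbb T$; there is a compact convex $\mathcal A\subset\mathbb T$ and a periodic $C^2$ $\psi_0$ on $[0,1]^2$ with $\psi_0(0,0)=0$, $\nabla\psi_0+\bar\rho\in\mathcal A$, $\frac1LH_{\eta_0}(\lfloor uL\rfloor)\to\psi_0(u)$, where $H_\eta(0,0)=0$, $H_\eta(u+\hat e_i)-H_\eta(u)=-\bar\rho^{(L)}_i+\mathbf 1_{b_i(u)\in\eta}$. $\Omega$ is the set of dimer coverings of $\mathcal H$ with the product topology; configurations of $\mathcal H_L$ are identified with their $L$-periodic lifts; $\eta_{-u}$ is the translate of $\eta$ by $-u$. For $N\ge1$, $L$ a multiple of $N$: $\mathcal I_N=\{(i,j):1\le i\le N, j=(j_1,j_2),1\le j_a\le N\}$, $B_j=\{u\in\mathcal T_L:u_a\in\{L(j_a-1)/N,\dots,Lj_a/N-1\},a=1,2\}$, $I_i=[t(i-1)/N,ti/N)$, and $p_{L,t,(i,j)}(f)=\frac{1}{(L/N)^2}\sum_{u\in B_j}\frac{1}{t/N}\int_{I_i}\mathbb E\,f(\eta_{-u}(s))\,ds$. *)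

theory Defs
  imports "HOL-Analysis.Analysis" "HOL-Probability.Probability"
begin

text \<open>Edge types of the honeycomb lattice H: the edge b_i(u) is crossed by the
  triangular-lattice edge from u to u + e_i.  A (possibly infinite) dimer configuration
  is a set of H-edges, encoded as a predicate on (u, i).\<close>

datatype etype = E1 | E2 | E3

type_synonym site = "int \<times> int"
type_synonym config = "site \<times> etype \<Rightarrow> bool"

fun evec :: "etype \<Rightarrow> site" where
  "evec E1 = (1, 0)"
| "evec E2 = (0, 1)"
| "evec E3 = (-1, -1)"

definition sadd :: "site \<Rightarrow> site \<Rightarrow> site" where
  "sadd u v = (fst u + fst v, snd u + snd v)"

definition exactly_one :: "bool \<Rightarrow> bool \<Rightarrow> bool \<Rightarrow> bool" where
  "exactly_one a b c \<longleftrightarrow> (a \<or> b \<or> c) \<and> \<not>(a \<and> b) \<and> \<not>(a \<and> c) \<and> \<not>(b \<and> c)"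

text \<open>The vertices of H are the triangles of T: for each u the triangles
  {u, u+e1, u+(1,1)} (edges b_1(u), b_2(u+e1), b_3(u+(1,1))) and
  {u, u+e2, u+(1,1)} (edges b_2(u), b_1(u+e2), b_3(u+(1,1))).\<close>

definition is_dimer_cov :: "config \<Rightarrow> bool" where
  "is_dimer_cov \<eta> \<longleftrightarrow> (\<forall>u.
     exactly_one (\<eta> (u, E1)) (\<eta> (sadd u (1,0), E2)) (\<eta> (sadd u (1,1), E3)) \<and>
     exactly_one (\<eta> (u, E2)) (\<eta> (sadd u (0,1), E1)) (\<eta> (sadd u (1,1), E3)))"

definition Omega :: "config set" where
  "Omega = {\<eta>. is_dimer_cov \<eta>}"

text \<open>Translate of eta by -u: eta_{-u}.\<close>
definition shift :: "site \<Rightarrow> config \<Rightarrow> config" where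
  "shift u \<eta> = (\<lambda>(w, i). \<eta> (sadd w u, i))"

definition periodic :: "nat \<Rightarrow> config \<Rightarrow> bool" where
  "periodic L \<eta> \<longleftrightarrow> (\<forall>w i. \<eta> (sadd w (int L, 0), i) = \<eta> (w, i) \<and> \<eta> (sadd w (0, int L), i) = \<eta> (w, i))"

text \<open>Fundamental domain = set of representatives of T_L.\<close>
definition box :: "nat \<Rightarrow> site set" where
  "box L = {0..<int L} \<times> {0..<int L}"

text \<open>Omega_{rho^(L)}: perfect matchings of H_L (as L-periodic lifts) with
  L^2 rho_i dimers of type i, i = 1,2.\<close>
definition Omega_L :: "nat \<Rightarrow> real \<times> real \<Rightarrow> config set" where
  "Omega_L L \<rho> = {\<eta> \<in> Omega. periodic L \<eta> \<and>
      real (card {u \<in> box L. \<eta> (u, E1)}) = (real L)^2 * fst \<rho> \<and>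
      real (card {u \<in> box L. \<eta> (u, E2)}) = (real L)^2 * snd \<rho>}"

text \<open>Particles (type-3 dimers) of a periodic configuration, as positions in T_L.\<close>
definition particles :: "nat \<Rightarrow> config \<Rightarrow> site set" where
  "particles L \<eta> = {u \<in> box L. \<eta> (u, E3)}"

definition tmod :: "nat \<Rightarrow> site \<Rightarrow> site" where
  "tmod L u = (fst u mod int L, snd u mod int L)"

definition moved :: "nat \<Rightarrow> site set \<Rightarrow> site \<Rightarrow> int \<Rightarrow> site set" where
  "moved L P p n = insert (tmod L (sadd p (-n, -n))) (P - {p})"

definition valid_move :: "nat \<Rightarrow> real \<times> real \<Rightarrow> config \<Rightarrow> site \<Rightarrow> int \<Rightarrow> bool" where
  "valid_move L \<rho> \<eta> p n \<longleftrightarrow>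
     (\<exists>\<eta>' \<in> Omega_L L \<rho>. particles L \<eta>' = moved L (particles L \<eta>) p n)"

text \<open>n = +m or -m with 1 \<le> m \<le> I^{+-}(p): all intermediate moves are valid.\<close>
definition allowed_move :: "nat \<Rightarrow> real \<times> real \<Rightarrow> config \<Rightarrow> site \<Rightarrow> int \<Rightarrow> bool" where
  "allowed_move L \<rho> \<eta> p n \<longleftrightarrow> n \<noteq> 0 \<and> (\<forall>k \<in> {1..\<bar>n\<bar>}. valid_move L \<rho> \<eta> p (sgn n * k))"

definition rate :: "nat \<Rightarrow> real \<times> real \<Rightarrow> config \<Rightarrow> config \<Rightarrow> real" where
  "rate L \<rho> \<eta> \<eta>' = (\<Sum>p \<in> particles L \<eta>.
      \<Sum>n \<in> {n. allowed_move L \<rho> \<eta> p n \<and> particles L \<eta>' = moved L (particles L \<eta>) p n}.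
        (real L)^2 / (2 * real_of_int \<bar>n\<bar>))"

definition generator :: "nat \<Rightarrow> real \<times> real \<Rightarrow> config \<Rightarrow> config \<Rightarrow> real" where
  "generator L \<rho> \<eta> \<eta>' =
     (if \<eta>' = \<eta> then - (\<Sum>\<zeta> \<in> Omega_L L \<rho> - {\<eta>}. rate L \<rho> \<eta> \<zeta>) else rate L \<rho> \<eta> \<eta>')"

fun gen_pow :: "nat \<Rightarrow> real \<times> real \<Rightarrow> nat \<Rightarrow> config \<Rightarrow> config \<Rightarrow> real" where
  "gen_pow L \<rho> 0 \<eta> \<eta>' = (if \<eta> = \<eta>' then 1 else 0)"
| "gen_pow L \<rho> (Suc k) \<eta> \<eta>' = (\<Sum>\<zeta> \<in> Omega_L L \<rho>. generator L \<rho> \<eta> \<zeta> * gen_pow L \<rho> k \<zeta> \<eta>')"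

definition trans_prob :: "nat \<Rightarrow> real \<times> real \<Rightarrow> real \<Rightarrow> config \<Rightarrow> config \<Rightarrow> real" where
  "trans_prob L \<rho> s \<eta> \<eta>' = (\<Sum>k. s ^ k / fact k * gen_pow L \<rho> k \<eta> \<eta>')"

definition expect :: "nat \<Rightarrow> real \<times> real \<Rightarrow> config \<Rightarrow> real \<Rightarrow> (config \<Rightarrow> real) \<Rightarrow> real" where
  "expect L \<rho> \<eta>0 s f = (\<Sum>\<eta>' \<in> Omega_L L \<rho>. trans_prob L \<rho> s \<eta>0 \<eta>' * f \<eta>')"

definition Bblock :: "nat \<Rightarrow> nat \<Rightarrow> nat \<times> nat \<Rightarrow> site set" where
  "Bblock N L j = {int (L div N) * (int (fst j) - 1) .. int (L div N) * int (fst j) - 1} \<times>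
                  {int (L div N) * (int (snd j) - 1) .. int (L div N) * int (snd j) - 1}"

definition index_set :: "nat \<Rightarrow> (nat \<times> (nat \<times> nat)) set" where
  "index_set N = {(i, j). i \<in> {1..N} \<and> fst j \<in> {1..N} \<and> snd j \<in> {1..N}}"

text \<open>p_{L,t,(i,j)} as a functional on observables f.\<close>
definition p_func :: "nat \<Rightarrow> nat \<Rightarrow> real \<Rightarrow> nat \<Rightarrow> nat \<times> nat \<Rightarrow> real \<times> real \<Rightarrow> config
    \<Rightarrow> (config \<Rightarrow> real) \<Rightarrow> real" where
  "p_func N L t i j \<rho> \<eta>0 f =
     1 / (real L / real N)^2 * (\<Sum>u \<in> Bblock N L j.
        1 / (t / real N) * (LINT s:{t * (real i - 1) / real N ..< t * real i / real N}|lborel.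
           expect L \<rho> \<eta>0 s (\<lambda>\<eta>. f (shift u \<eta>))))"

definition weak_limit_point :: "nat \<Rightarrow> real \<Rightarrow> nat \<Rightarrow> nat \<times> nat \<Rightarrow> (nat \<Rightarrow> real \<times> real)
    \<Rightarrow> (nat \<Rightarrow> config) \<Rightarrow> config measure \<Rightarrow> bool" where
  "weak_limit_point N t i j \<rho>L \<eta>0L \<mu> \<longleftrightarrow>
     prob_space \<mu> \<and> sets \<mu> = sets borel \<and> emeasure \<mu> Omega = 1 \<and>
     (\<exists>Ls :: nat \<Rightarrow> nat. strict_mono Ls \<and> (\<forall>k. N dvd Ls k) \<and>
        (\<forall>f :: config \<Rightarrow> real. continuous_on Omega f \<and> bounded (f ` Omega) \<longrightarrow>
           (\<lambda>k. p_func N (Ls k) t i j (\<rho>L (Ls k)) (\<eta>0L (Ls k)) f)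
             \<longlonglongrightarrow> (\<integral>x. indicator Omega x * f x \<partial>\<mu>)))"

definition translation_invariant :: "config measure \<Rightarrow> bool" where
  "translation_invariant \<mu> \<longleftrightarrow>
     (\<forall>u A. A \<in> sets \<mu> \<longrightarrow> emeasure \<mu> (shift u -` A \<inter> space \<mu>) = emeasure \<mu> A)"

definition Tri :: "(real \<times> real) set" where
  "Tri = {r. fst r > 0 \<and> snd r > 0 \<and> fst r + snd r < 1}"

definition dens :: "real \<times> real \<Rightarrow> etype \<Rightarrow> real" where
  "dens \<rho> i = (case i of E1 \<Rightarrow> fst \<rho> | E2 \<Rightarrow> snd \<rho> | E3 \<Rightarrow> 1 - fst \<rho> - snd \<rho>)"

definition is_height :: "real \<times> real \<Rightarrow> config \<Rightarrow> (site \<Rightarrow> real) \<Rightarrow> bool" where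
  "is_height \<rho> \<eta> H \<longleftrightarrow> H (0, 0) = 0 \<and>
     (\<forall>u i. H (sadd u (evec i)) - H u = - dens \<rho> i + (if \<eta> (u, i) then 1 else 0))"

definition height :: "real \<times> real \<Rightarrow> config \<Rightarrow> site \<Rightarrow> real" where
  "height \<rho> \<eta> = (THE H. is_height \<rho> \<eta> H)"

definition C2 :: "(real \<times> real \<Rightarrow> real) \<Rightarrow> bool" where
  "C2 f \<longleftrightarrow> (\<exists>Df :: real \<times> real \<Rightarrow> (real \<times> real) \<Rightarrow>\<^sub>L real.
                \<exists>D2f :: real \<times> real \<Rightarrow> (real \<times> real) \<Rightarrow>\<^sub>L ((real \<times> real) \<Rightarrow>\<^sub>L real).
     (\<forall>x. (f has_derivative blinfun_apply (Df x)) (at x)) \<and>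
     (\<forall>x. (Df has_derivative blinfun_apply (D2f x)) (at x)) \<and>
     continuous_on UNIV D2f)"

definition grad :: "(real \<times> real \<Rightarrow> real) \<Rightarrow> real \<times> real \<Rightarrow> real \<times> real" where
  "grad f x = (frechet_derivative f (at x) (1, 0), frechet_derivative f (at x) (0, 1))"

end

theory Submission
  imports Defs
begin

text \<open>Translating an observable by \<open>v\<close> changes the block average \<open>p_func\<close> only through
  the sites of \<open>B\<^sub>j\<close> that the translation moves across its boundary, a fraction
  \<open>O(|v| N / L)\<close> of the block, because the chain maps bounded observables to observables
  with the same bound: \<open>exp (s Q)\<close> is a stochastic matrix for every generator \<open>Q\<close>.
  Hence every weak limit point gives a cylinder set and its translate the same mass, and
  cylinder sets determine a measure on the product space \<open>Omega\<close> lives in.\<close>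

section \<open>Cylinder sets\<close>

instance etype :: countable by countable_datatype

text \<open>Needed for the product \<open>\<sigma>\<close>-algebra on \<open>config\<close> to coincide with the Borel one.\<close>

instance bool :: second_countable_topology
  by standard
    (auto intro!: exI[of _ UNIV] discrete_topology_class.open_discrete
      simp: fun_eq_iff intro: generate_topology.Basis)

definition cylinder :: "(site \<times> etype) set \<Rightarrow> (site \<times> etype \<Rightarrow> bool set) \<Rightarrow> config set" where
  "cylinder J F = {x. \<forall>j\<in>J. x j \<in> F j}"

lemma indicator_cylinder:
  "finite J \<Longrightarrow> indicator (cylinder J F) x = (\<Prod>j\<in>J. indicator (F j) (x j) :: real)"
  by (induction J rule: finite_induct) (auto simp: cylinder_def indicator_def)

lemma continuous_on_indicator_cylinder:
  assumes "finite J"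
  shows "continuous_on S (indicator (cylinder J F) :: config \<Rightarrow> real)"
proof -
  have "continuous_on S (\<lambda>x::config. indicator (F j) (x j) :: real)" for j
    by (rule continuous_on_compose2[of UNIV "indicator (F j)" S "\<lambda>x. x j"])
       (auto intro: continuous_on_subset[OF continuous_on_product_coordinates])
  then show ?thesis
    by (subst continuous_on_cong[OF refl indicator_cylinder[OF assms]]) (auto intro!: continuous_on_prod)
qed

lemma continuous_on_shift: "continuous_on S (shift u)"
  unfolding shift_def
  by (intro continuous_on_coordinatewise_then_product)
     (auto simp: case_prod_unfold intro: continuous_on_subset[OF continuous_on_product_coordinates])

lemma measurable_shift:
  assumes "sets \<mu> = sets (borel :: config measure)"
  shows "shift u \<in> measurable \<mu> \<mu>"
  using borel_measurable_continuous_onI[OF continuous_on_shift] measurable_cong_sets[OF assms assms] by blast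

lemma cylinder_eq_INT: "cylinder J F = (\<Inter>j\<in>J. (\<lambda>x. x j) -` F j)"
  by (auto simp: cylinder_def)

lemma open_cylinder: "finite J \<Longrightarrow> open (cylinder J F)"
  unfolding cylinder_eq_INT
  by (intro open_INT ballI open_vimage discrete_topology_class.open_discrete continuous_on_product_coordinates)

lemma translation_invariant_if_cylinders:
  assumes sets: "sets \<mu> = sets (borel :: config measure)" and "prob_space \<mu>"
    and cyl: "\<And>J F v. finite J \<Longrightarrow> measure \<mu> (shift v -` cylinder J F) = measure \<mu> (cylinder J F)"
  shows "translation_invariant \<mu>"
  unfolding translation_invariant_def
proof (intro allI impI)
  fix u A assume A: "A \<in> sets \<mu>"
  interpret prob_space \<mu> by fact
  have sets_PiM: "sets \<mu> = sets (Pi\<^sub>M UNIV (\<lambda>_. borel))"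
    using sets by (simp add: sets_PiM_equal_borel[where 'a="site \<times> etype" and 'b=bool])
  have meas: "shift u \<in> measurable \<mu> \<mu>" by (rule measurable_shift[OF sets])
  have space: "space \<mu> = UNIV" using sets_eq_imp_space_eq[OF sets] by simp
  have "\<mu> = distr \<mu> \<mu> (shift u)"
  proof (rule measure_eqI_PiM_infinite[OF sets_PiM])
    show "sets (distr \<mu> \<mu> (shift u)) = sets (Pi\<^sub>M UNIV (\<lambda>_. borel))" using sets_PiM by simp
    fix F :: "site \<times> etype \<Rightarrow> bool set" and J :: "(site \<times> etype) set" assume J: "finite J"
    have "prod_emb UNIV (\<lambda>_. borel) J (Pi\<^sub>E J F) = cylinder J F"
      by (auto simp: prod_emb_def cylinder_def PiE_def extensional_def Pi_def)
    moreover have "cylinder J F \<in> sets \<mu>" using sets open_cylinder[OF J] by simp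
    ultimately show "\<mu> (prod_emb UNIV (\<lambda>_. borel) J (Pi\<^sub>E J F))
        = distr \<mu> \<mu> (shift u) (prod_emb UNIV (\<lambda>_. borel) J (Pi\<^sub>E J F))"
      using cyl[OF J] meas by (simp add: emeasure_distr emeasure_eq_measure space)
  qed (simp add: finite_measure_axioms)
  then show "emeasure \<mu> (shift u -` A \<inter> space \<mu>) = emeasure \<mu> A"
    using emeasure_distr[OF meas A] by simp
qed

lemma integral_indicator_Omega_mult:
  assumes "prob_space \<mu>" "emeasure \<mu> Omega = 1" "C \<in> sets \<mu>"
  shows "(\<integral>x. indicator Omega x * indicator C x \<partial>\<mu>) = (measure \<mu> C :: real)"
proof -
  interpret prob_space \<mu> by fact
  have Omega: "Omega \<in> sets \<mu>" using assms(2) emeasure_notin_sets by fastforce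
  then have "AE x in \<mu>. x \<in> Omega"
    using assms(2) by (simp add: prob_space.AE_in_set_eq_1 assms(1) emeasure_eq_measure)
  then have "(\<integral>x. indicator Omega x * indicator C x \<partial>\<mu>) = (\<integral>x. indicator C x \<partial>\<mu> :: real)"
    using Omega assms(3) by (intro integral_cong_AE) (auto simp: indicator_def)
  then show ?thesis using assms(3) by simp
qed

section \<open>Exponentials of generator matrices\<close>

fun mat_pow :: "'a set \<Rightarrow> ('a \<Rightarrow> 'a \<Rightarrow> real) \<Rightarrow> nat \<Rightarrow> 'a \<Rightarrow> 'a \<Rightarrow> real" where
  "mat_pow S Q 0 x y = (if x = y then 1 else 0)"
| "mat_pow S Q (Suc k) x y = (\<Sum>z\<in>S. Q x z * mat_pow S Q k z y)"

definition mat_exp :: "'a set \<Rightarrow> ('a \<Rightarrow> 'a \<Rightarrow> real) \<Rightarrow> real \<Rightarrow> 'a \<Rightarrow> 'a \<Rightarrow> real" where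
  "mat_exp S Q s x y = (\<Sum>k. s ^ k / fact k * mat_pow S Q k x y)"

definition generator_matrix :: "'a set \<Rightarrow> ('a \<Rightarrow> 'a \<Rightarrow> real) \<Rightarrow> bool" where
  "generator_matrix S Q \<longleftrightarrow>
     (\<forall>a\<in>S. \<forall>b\<in>S. a \<noteq> b \<longrightarrow> Q a b \<ge> 0) \<and> (\<forall>a\<in>S. (\<Sum>b\<in>S. Q a b) = 0)"

lemma abs_mat_pow_le:
  assumes "finite S" "x \<in> S"
  shows "\<bar>mat_pow S Q k x y\<bar> \<le> (\<Sum>a\<in>S. \<Sum>b\<in>S. \<bar>Q a b\<bar>) ^ k"
  using assms(2)
proof (induction k arbitrary: x)
  case (Suc k)
  let ?M = "\<Sum>a\<in>S. \<Sum>b\<in>S. \<bar>Q a b\<bar>"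
  have "\<bar>mat_pow S Q (Suc k) x y\<bar> \<le> (\<Sum>z\<in>S. \<bar>Q x z\<bar> * \<bar>mat_pow S Q k z y\<bar>)"
    by (simp add: abs_mult[symmetric] sum_abs)
  also have "\<dots> \<le> (\<Sum>z\<in>S. \<bar>Q x z\<bar>) * ?M ^ k"
    by (auto simp: sum_distrib_right intro!: sum_mono mult_left_mono Suc.IH)
  also have "\<dots> \<le> ?M * ?M ^ k"
    using member_le_sum[of x S "\<lambda>a. \<Sum>b\<in>S. \<bar>Q a b\<bar>"] Suc.prems assms(1)
    by (intro mult_right_mono) (simp_all add: sum_nonneg)
  finally show ?case by simp
qed simp

lemma summable_norm_mat_exp_series:
  assumes "finite S" "x \<in> S"
  shows "summable (\<lambda>k. norm (s ^ k / fact k * mat_pow S Q k x y))"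
proof (rule summable_comparison_test[OF _ summable_exp], intro exI allI impI)
  let ?M = "\<Sum>a\<in>S. \<Sum>b\<in>S. \<bar>Q a b\<bar>"
  fix k
  have "norm (norm (s ^ k / fact k * mat_pow S Q k x y)) = \<bar>s\<bar> ^ k / fact k * \<bar>mat_pow S Q k x y\<bar>"
    by (simp add: abs_mult power_abs)
  also have "\<dots> \<le> \<bar>s\<bar> ^ k / fact k * ?M ^ k"
    by (rule mult_left_mono[OF abs_mat_pow_le[OF assms]]) simp
  also have "\<dots> = inverse (fact k) * (\<bar>s\<bar> * ?M) ^ k"
    by (simp add: power_mult_distrib divide_inverse)
  finally show "norm (norm (s ^ k / fact k * mat_pow S Q k x y)) \<le> inverse (fact k) * (\<bar>s\<bar> * ?M) ^ k" .
qed

lemma binomial_sum_Suc: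
  fixes g :: "nat \<Rightarrow> real"
  shows "(\<Sum>k\<le>Suc m. real (Suc m choose k) * c ^ (Suc m - k) * g k)
     = (\<Sum>k\<le>m. real (m choose k) * c ^ (m - k) * g (Suc k)) + c * (\<Sum>k\<le>m. real (m choose k) * c ^ (m - k) * g k)"
proof -
  have "(\<Sum>k\<le>Suc m. real (Suc m choose k) * c ^ (Suc m - k) * g k)
      = (\<Sum>k\<le>m. real (m choose k) * c ^ (m - k) * g (Suc k))
        + (c ^ Suc m * g 0 + (\<Sum>k\<le>m. real (m choose Suc k) * c ^ (m - k) * g (Suc k)))"
    by (subst sum.atMost_Suc_shift) (simp add: sum.distrib algebra_simps)
  also have "c ^ Suc m * g 0 + (\<Sum>k\<le>m. real (m choose Suc k) * c ^ (m - k) * g (Suc k))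
      = (\<Sum>k\<le>Suc m. real (m choose k) * c ^ (Suc m - k) * g k)"
    by (subst sum.atMost_Suc_shift) simp
  also have "\<dots> = c * (\<Sum>k\<le>m. real (m choose k) * c ^ (m - k) * g k)"
    by (simp add: sum_distrib_left Suc_diff_le algebra_simps)
  finally show ?thesis .
qed

lemma mat_pow_add_diagonal:
  assumes "finite S" "x \<in> S"
  shows "mat_pow S (\<lambda>a b. Q a b + (if a = b then c else 0)) m x y =
     (\<Sum>k\<le>m. real (m choose k) * c ^ (m - k) * mat_pow S Q k x y)"
  using assms(2)
proof (induction m arbitrary: x)
  case (Suc m)
  let ?P = "\<lambda>a b. Q a b + (if a = b then c else 0)"
  have "(\<Sum>z\<in>S. (if x = z then c else 0) * mat_pow S ?P m z y)
      = (\<Sum>z\<in>S. if x = z then c * mat_pow S ?P m z y else 0)"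
    by (rule sum.cong) auto
  also have "\<dots> = c * mat_pow S ?P m x y"
    using Suc.prems assms(1) by simp
  finally have "(\<Sum>z\<in>S. (if x = z then c else 0) * mat_pow S ?P m z y) = c * mat_pow S ?P m x y" .
  then have "mat_pow S ?P (Suc m) x y = (\<Sum>z\<in>S. Q x z * mat_pow S ?P m z y) + c * mat_pow S ?P m x y"
    by (simp add: distrib_right sum.distrib)
  also have "(\<Sum>z\<in>S. Q x z * mat_pow S ?P m z y)
      = (\<Sum>k\<le>m. real (m choose k) * c ^ (m - k) * mat_pow S Q (Suc k) x y)"
    by (simp add: Suc.IH sum_distrib_left mult.left_commute[of "Q x _"]) (rule sum.swap)
  finally show ?case using binomial_sum_Suc[of m c "\<lambda>k. mat_pow S Q k x y"] Suc.prems Suc.IH by simp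
qed simp

lemma mat_pow_nonneg:
  assumes "x \<in> S" "\<And>a b. a \<in> S \<Longrightarrow> b \<in> S \<Longrightarrow> Q a b \<ge> 0"
  shows "mat_pow S Q m x y \<ge> 0"
  using assms(1) by (induction m arbitrary: x) (auto intro!: sum_nonneg mult_nonneg_nonneg assms(2))

lemma sum_mat_pow_row:
  assumes "finite S" "x \<in> S" "\<And>a. a \<in> S \<Longrightarrow> (\<Sum>b\<in>S. Q a b) = 0"
  shows "(\<Sum>y\<in>S. mat_pow S Q k x y) = (if k = 0 then 1 else 0)"
  using assms(2)
proof (induction k arbitrary: x)
  case (Suc k)
  have "(\<Sum>y\<in>S. mat_pow S Q (Suc k) x y) = (\<Sum>z\<in>S. Q x z * (\<Sum>y\<in>S. mat_pow S Q k z y))"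
    by (simp add: sum_distrib_left) (rule sum.swap)
  also have "\<dots> = (\<Sum>z\<in>S. Q x z) * (if k = 0 then 1 else 0)"
    by (simp add: Suc.IH sum_distrib_right)
  finally show ?case using assms(3)[OF Suc.prems] by simp
qed (simp add: assms(1))

text \<open>Adding \<open>c\<close> times the identity with \<open>c\<close> large makes all entries nonnegative, and
  \<open>exp (s (Q + c I)) = exp (c s) exp (s Q)\<close> is a Cauchy product of the two exponential series.\<close>

lemma mat_exp_nonneg:
  assumes "finite S" "x \<in> S" "s \<ge> 0" and Q: "generator_matrix S Q"
  shows "mat_exp S Q s x y \<ge> 0"
proof -
  define c where "c = (\<Sum>a\<in>S. \<bar>Q a a\<bar>)"
  let ?P = "\<lambda>a b. Q a b + (if a = b then c else 0)"
  define A where "A = (\<lambda>k. s ^ k / fact k * mat_pow S Q k x y)"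
  define B where "B = (\<lambda>k. (c * s) ^ k / fact k)"
  have B: "B sums exp (c * s)"
    using exp_converges[of "c * s"] by (simp add: B_def divide_inverse mult.commute)
  have "summable (\<lambda>k. norm (B k))"
    using exp_converges[of "\<bar>c * s\<bar>"]
    by (simp add: B_def sums_iff power_abs abs_mult divide_inverse mult.commute)
  moreover have "summable (\<lambda>k. norm (A k))"
    unfolding A_def by (rule summable_norm_mat_exp_series[OF assms(1,2)])
  ultimately have sums: "(\<lambda>m. \<Sum>k\<le>m. A k * B (m - k)) sums (suminf A * suminf B)"
    by (intro Cauchy_product_sums)
  have "(\<Sum>k\<le>m. A k * B (m - k)) = s ^ m / fact m * mat_pow S ?P m x y" for m
    unfolding mat_pow_add_diagonal[OF assms(1,2)] sum_distrib_left
  proof (rule sum.cong[OF refl])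
    fix k assume "k \<in> {..m}"
    then have km: "k \<le> m" by simp
    then have "s ^ m = s ^ k * s ^ (m - k)" by (simp flip: power_add)
    with km show "A k * B (m - k) = s ^ m / fact m * (real (m choose k) * c ^ (m - k) * mat_pow S Q k x y)"
      unfolding A_def B_def binomial_fact[OF km] by (simp add: field_simps power_mult_distrib)
  qed
  moreover have "mat_pow S ?P m x y \<ge> 0" for m
  proof (rule mat_pow_nonneg[OF assms(2)])
    fix a b assume "a \<in> S" "b \<in> S"
    moreover have "\<bar>Q a a\<bar> \<le> c" if "a \<in> S"
      unfolding c_def using that assms(1) by (intro member_le_sum) auto
    ultimately show "?P a b \<ge> 0" using Q unfolding generator_matrix_def by (cases "a = b") auto
  qed
  ultimately have "0 \<le> (\<Sum>k\<le>m. A k * B (m - k))" for m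
    using assms(3) by simp
  then have "0 \<le> suminf A * suminf B"
    by (rule sums_le[OF _ sums_zero sums])
  moreover have "suminf B > 0"
    using sums_unique[OF B] by (metis exp_gt_zero)
  ultimately have "suminf A \<ge> 0"
    by (simp add: zero_le_mult_iff)
  then show ?thesis
    by (simp add: mat_exp_def A_def)
qed

lemma sum_mat_exp_row:
  assumes "finite S" "x \<in> S" "generator_matrix S Q"
  shows "(\<Sum>y\<in>S. mat_exp S Q s x y) = 1"
proof -
  have "(\<Sum>y\<in>S. mat_exp S Q s x y) = (\<Sum>k. \<Sum>y\<in>S. s ^ k / fact k * mat_pow S Q k x y)"
    unfolding mat_exp_def
    by (intro suminf_sum[symmetric] summable_norm_cancel[OF summable_norm_mat_exp_series[OF assms(1,2)]])
  also have "\<dots> = (\<Sum>k. if k = 0 then 1 else 0)"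
  proof -
    have "(\<Sum>y\<in>S. s ^ k / fact k * mat_pow S Q k x y) = s ^ k / fact k * (\<Sum>y\<in>S. mat_pow S Q k x y)"
      for k by (rule sum_distrib_left[symmetric])
    then have "(\<Sum>y\<in>S. s ^ k / fact k * mat_pow S Q k x y) = (if k = 0 then 1 else 0)" for k
      using assms by (simp add: sum_mat_pow_row generator_matrix_def)
    then show ?thesis by simp
  qed
  also have "\<dots> = 1"
    using sums_single[of 0 "\<lambda>_. 1::real"] by (simp add: sums_iff)
  finally show ?thesis .
qed

lemma abs_sum_mat_exp_mult_le:
  assumes "finite S" "x \<in> S" "s \<ge> 0" "generator_matrix S Q" and g: "\<And>y. y \<in> S \<Longrightarrow> \<bar>g y\<bar> \<le> M"
  shows "\<bar>\<Sum>y\<in>S. mat_exp S Q s x y * g y\<bar> \<le> M"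
proof -
  have "\<bar>\<Sum>y\<in>S. mat_exp S Q s x y * g y\<bar> \<le> (\<Sum>y\<in>S. mat_exp S Q s x y * M)"
    using mat_exp_nonneg[OF assms(1-4)] g
    by (intro order_trans[OF sum_abs sum_mono]) (simp add: abs_mult mult_left_mono)
  also have "\<dots> = M" using sum_mat_exp_row[OF assms(1,2,4)] by (simp flip: sum_distrib_right)
  finally show ?thesis .
qed

lemma trans_prob_eq_mat_exp: "trans_prob L \<rho> = mat_exp (Omega_L L \<rho>) (generator L \<rho>)"
proof -
  have "gen_pow L \<rho> k = mat_pow (Omega_L L \<rho>) (generator L \<rho>) k" for k
    by (induction k) (simp_all add: fun_eq_iff)
  then show ?thesis by (simp add: fun_eq_iff trans_prob_def mat_exp_def)
qed

lemma generator_matrix_generator: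
  assumes "finite (Omega_L L \<rho>)"
  shows "generator_matrix (Omega_L L \<rho>) (generator L \<rho>)"
  unfolding generator_matrix_def
proof (intro conjI ballI impI)
  show "generator L \<rho> a b \<ge> 0" if "a \<noteq> b" for a b
    using that by (simp add: generator_def rate_def sum_nonneg)
  fix a assume a: "a \<in> Omega_L L \<rho>"
  have "(\<Sum>b\<in>Omega_L L \<rho> - {a}. generator L \<rho> a b) = (\<Sum>b\<in>Omega_L L \<rho> - {a}. rate L \<rho> a b)"
    by (rule sum.cong) (auto simp: generator_def)
  then show "(\<Sum>b\<in>Omega_L L \<rho>. generator L \<rho> a b) = 0"
    by (simp add: sum.remove[OF assms a] generator_def)
qed

lemma abs_expect_le:
  assumes "\<eta>0 \<in> Omega_L L \<rho>" "s \<ge> 0" and f: "\<And>\<eta>. \<bar>f \<eta>\<bar> \<le> M"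
  shows "\<bar>expect L \<rho> \<eta>0 s f\<bar> \<le> M"
proof (cases "finite (Omega_L L \<rho>)")
  case True
  then show ?thesis
    unfolding expect_def trans_prob_eq_mat_exp
    by (intro abs_sum_mat_exp_mult_le assms(1,2) f generator_matrix_generator)
next
  case False
  then show ?thesis using f[of \<eta>0] by (simp add: expect_def)
qed

section \<open>Boundary estimate for the block averages\<close>

lemma abs_set_integral_average_le:
  fixes h :: "real \<Rightarrow> real"
  assumes "a < b" and h: "\<And>s. s \<in> {a..<b} \<Longrightarrow> \<bar>h s\<bar> \<le> M"
  shows "\<bar>1 / (b - a) * (LINT s:{a..<b}|lborel. h s)\<bar> \<le> M"
proof -
  have M: "M \<ge> 0" using h[of a] \<open>a < b\<close> by force
  have "\<bar>LINT s:{a..<b}|lborel. h s\<bar> \<le> (\<integral>s. norm (indicator {a..<b} s * h s) \<partial>lborel)"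
    unfolding set_lebesgue_integral_def by (simp add: integral_norm_bound)
  also have "\<dots> \<le> (\<integral>s. M * indicator {a..<b} s \<partial>lborel)"
  proof (rule integral_mono')
    show "integrable lborel (\<lambda>s. M * indicator {a..<b} s)"
      using \<open>a < b\<close> by (intro integrable_mult_right integrable_real_indicator) auto
  qed (use h M in \<open>auto simp: indicator_def\<close>)
  also have "\<dots> = M * (b - a)" using \<open>a < b\<close> by simp
  finally show ?thesis using \<open>a < b\<close> by (simp add: abs_mult divide_le_eq mult.commute)
qed

lemma card_shifted_interval_diff: "card ({a + v..b + v} - {a..b::int}) \<le> nat \<bar>v\<bar>"
proof -
  have "card ({a + v..b + v} - {a..b}) \<le> card ({a + v..a - 1} \<union> {b + 1..b + v})"
    by (intro card_mono) auto
  also have "\<dots> \<le> nat \<bar>v\<bar>"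
    using card_Un_le[of "{a + v..a - 1}" "{b + 1..b + v}"] by auto
  finally show ?thesis .
qed

lemma card_shifted_rectangle_diff:
  fixes a b c d v w :: int
  shows "card (({a + v..b + v} \<times> {c + w..d + w}) - ({a..b} \<times> {c..d}))
     \<le> nat \<bar>v\<bar> * nat (d - c + 1) + nat (b - a + 1) * nat \<bar>w\<bar>"
proof -
  let ?X = "{a..b}" and ?X' = "{a + v..b + v}" and ?Y = "{c..d}" and ?Y' = "{c + w..d + w}"
  have "card ((?X' \<times> ?Y') - (?X \<times> ?Y)) \<le> card (((?X' - ?X) \<times> ?Y') \<union> (?X' \<times> (?Y' - ?Y)))"
    by (intro card_mono) auto
  also have "\<dots> \<le> card ((?X' - ?X) \<times> ?Y') + card (?X' \<times> (?Y' - ?Y))"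
    by (rule card_Un_le)
  also have "\<dots> = card (?X' - ?X) * card ?Y' + card ?X' * card (?Y' - ?Y)"
    by (simp add: card_cartesian_product)
  also have "\<dots> \<le> nat \<bar>v\<bar> * nat (d - c + 1) + nat (b - a + 1) * nat \<bar>w\<bar>"
    using card_shifted_interval_diff[of a v b] card_shifted_interval_diff[of c w d]
    by (intro add_mono mult_mono) auto
  finally show ?thesis .
qed

lemma abs_sum_diff_le:
  fixes T :: "'a \<Rightarrow> real"
  assumes "finite A" "finite B" "\<And>x. \<bar>T x\<bar> \<le> M"
  shows "\<bar>sum T A - sum T B\<bar> \<le> M * real (card (A - B) + card (B - A))"
proof -
  have "sum T A - sum T B = sum T (A - B) - sum T (B - A)"
    using sum.Int_Diff[OF assms(1), of T B] sum.Int_Diff[OF assms(2), of T A] by (simp add: Int_commute)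
  also have "\<bar>\<dots>\<bar> \<le> \<bar>sum T (A - B)\<bar> + \<bar>sum T (B - A)\<bar>" by (rule abs_triangle_ineq4)
  also have "\<dots> \<le> real (card (A - B)) * M + real (card (B - A)) * M"
    using assms(3) by (intro add_mono order_trans[OF sum_abs sum_bounded_above]) auto
  finally show ?thesis by (simp add: algebra_simps)
qed

lemma abs_sum_shift_rectangle_diff_le:
  fixes T :: "site \<Rightarrow> real" and a b c d :: int
  assumes "\<And>u. \<bar>T u\<bar> \<le> M"
  shows "\<bar>(\<Sum>u\<in>{a..b} \<times> {c..d}. T (sadd u z)) - (\<Sum>u\<in>{a..b} \<times> {c..d}. T u)\<bar>
     \<le> 2 * M * real (nat \<bar>fst z\<bar> * nat (d - c + 1) + nat (b - a + 1) * nat \<bar>snd z\<bar>)"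
proof -
  obtain v w where z: "z = (v, w)" by (cases z)
  let ?R = "{a..b} \<times> {c..d}" and ?R' = "{a + v..b + v} \<times> {c + w..d + w}"
  let ?K = "nat \<bar>v\<bar> * nat (d - c + 1) + nat (b - a + 1) * nat \<bar>w\<bar>"
  have M: "M \<ge> 0" using assms[of z] by linarith
  have "card (?R' - ?R) \<le> ?K"
    by (rule card_shifted_rectangle_diff)
  moreover have "card (?R - ?R') \<le> ?K"
    using card_shifted_rectangle_diff[of "a + v" "- v" "b + v" "c + w" "- w" "d + w"]
    by (simp add: algebra_simps)
  ultimately have "card (?R' - ?R) + card (?R - ?R') \<le> 2 * ?K"
    unfolding mult_2 by (rule add_mono)
  then have card: "real (card (?R' - ?R) + card (?R - ?R')) \<le> real (2 * ?K)"
    by (simp only: of_nat_le_iff)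
  have "(\<Sum>u\<in>?R. T (sadd u z)) = sum T ?R'"
    by (rule sum.reindex_bij_witness[where j = "\<lambda>u. sadd u z" and i = "\<lambda>u. sadd u (- v, - w)"])
       (auto simp: z sadd_def)
  then have "\<bar>(\<Sum>u\<in>?R. T (sadd u z)) - sum T ?R\<bar> \<le> M * real (card (?R' - ?R) + card (?R - ?R'))"
    using abs_sum_diff_le[of ?R' ?R T M] assms by simp
  also have "\<dots> \<le> M * real (2 * ?K)"
    using card M by (rule mult_left_mono)
  finally show ?thesis by (simp add: z algebra_simps)
qed

lemma shift_shift: "shift v (shift u \<eta>) = shift (sadd u v) \<eta>"
  by (auto simp: shift_def sadd_def algebra_simps)

lemma abs_sum_shift_Bblock_diff_le:
  fixes T :: "site \<Rightarrow> real"
  assumes "N \<ge> 1" "\<And>u. \<bar>T u\<bar> \<le> M"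
  shows "\<bar>(\<Sum>u\<in>Bblock N L j. T (sadd u v)) - (\<Sum>u\<in>Bblock N L j. T u)\<bar>
     \<le> 2 * M * real (nat \<bar>fst v\<bar> + nat \<bar>snd v\<bar>) * (real L / real N)"
proof -
  define n where "n = int (L div N)"
  have "Bblock N L j = {n * (int (fst j) - 1)..n * (int (fst j) - 1) + n - 1}
      \<times> {n * (int (snd j) - 1)..n * (int (snd j) - 1) + n - 1}"
    by (simp add: Bblock_def n_def algebra_simps)
  then have "\<bar>(\<Sum>u\<in>Bblock N L j. T (sadd u v)) - (\<Sum>u\<in>Bblock N L j. T u)\<bar>
      \<le> 2 * M * real (nat \<bar>fst v\<bar> * nat n + nat n * nat \<bar>snd v\<bar>)"
    using abs_sum_shift_rectangle_diff_le[where T = T and M = M and z = v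
        and a = "n * (int (fst j) - 1)" and b = "n * (int (fst j) - 1) + n - 1"
        and c = "n * (int (snd j) - 1)" and d = "n * (int (snd j) - 1) + n - 1", OF assms(2)]
    by simp
  also have "\<dots> = 2 * M * real (nat \<bar>fst v\<bar> + nat \<bar>snd v\<bar>) * real (L div N)"
    by (simp add: n_def algebra_simps)
  also have "\<dots> \<le> 2 * M * real (nat \<bar>fst v\<bar> + nat \<bar>snd v\<bar>) * (real L / real N)"
    using assms(2)[of 0] of_nat_div_le_of_nat[of L N] by (intro mult_left_mono) auto
  finally show ?thesis .
qed

lemma abs_p_func_shift_diff_le:
  assumes "t > 0" "N \<ge> 1" "i \<ge> 1" "L \<ge> 1" "\<eta>0 \<in> Omega_L L \<rho>" and f: "\<And>\<eta>. \<bar>f \<eta>\<bar> \<le> M"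
  shows "\<bar>p_func N L t i j \<rho> \<eta>0 (\<lambda>\<eta>. f (shift v \<eta>)) - p_func N L t i j \<rho> \<eta>0 f\<bar>
     \<le> 2 * M * real (nat \<bar>fst v\<bar> + nat \<bar>snd v\<bar>) * real N / real L"
proof -
  define a where "a = t * (real i - 1) / real N"
  define b where "b = t * real i / real N"
  define T where "T u = 1 / (t / real N) * (LINT s:{a..<b}|lborel. expect L \<rho> \<eta>0 s (\<lambda>\<eta>. f (shift u \<eta>)))" for u
  have ba: "b - a = t / real N"
    by (simp add: a_def b_def diff_divide_distrib[symmetric] algebra_simps)
  have "a \<ge> 0"
    unfolding a_def using assms(1-3) by (intro divide_nonneg_nonneg mult_nonneg_nonneg) auto
  have "\<bar>T u\<bar> \<le> M" for u
    unfolding T_def ba[symmetric]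
  proof (rule abs_set_integral_average_le)
    have "t / real N > 0" using assms(1,2) by simp
    then show "a < b" using ba by simp
    fix s assume "s \<in> {a..<b}"
    then have "s \<ge> 0" using \<open>a \<ge> 0\<close> by simp
    with assms(5) show "\<bar>expect L \<rho> \<eta>0 s (\<lambda>\<eta>. f (shift u \<eta>))\<bar> \<le> M"
      by (rule abs_expect_le) (rule f)
  qed
  then have diff: "\<bar>(\<Sum>u\<in>Bblock N L j. T (sadd u v)) - (\<Sum>u\<in>Bblock N L j. T u)\<bar>
      \<le> 2 * M * real (nat \<bar>fst v\<bar> + nat \<bar>snd v\<bar>) * (real L / real N)"
    using assms(2) by (intro abs_sum_shift_Bblock_diff_le)
  have p_eq: "p_func N L t i j \<rho> \<eta>0 (\<lambda>\<eta>. f (shift v \<eta>)) - p_func N L t i j \<rho> \<eta>0 f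
      = (real N / real L)^2 * ((\<Sum>u\<in>Bblock N L j. T (sadd u v)) - (\<Sum>u\<in>Bblock N L j. T u))"
    unfolding p_func_def T_def a_def b_def by (simp add: shift_shift power_divide right_diff_distrib)
  have "\<bar>p_func N L t i j \<rho> \<eta>0 (\<lambda>\<eta>. f (shift v \<eta>)) - p_func N L t i j \<rho> \<eta>0 f\<bar>
      \<le> (real N / real L)^2 * (2 * M * real (nat \<bar>fst v\<bar> + nat \<bar>snd v\<bar>) * (real L / real N))"
    unfolding p_eq abs_mult abs_power2 by (rule mult_left_mono[OF diff]) simp
  also have "\<dots> = 2 * M * real (nat \<bar>fst v\<bar> + nat \<bar>snd v\<bar>) * real N / real L"
    using assms(2,4) by (simp add: field_simps power2_eq_square)
  finally show ?thesis .
qed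

lemma p_func_shift_diff_tendsto_zero:
  assumes "\<forall>\<^sub>F L in sequentially. \<eta>0L L \<in> Omega_L L (\<rho>L L)"
    and "t > 0" "N \<ge> 1" "i \<ge> 1" "\<And>\<eta>. \<bar>f \<eta>\<bar> \<le> M"
  shows "(\<lambda>L. p_func N L t i j (\<rho>L L) (\<eta>0L L) (\<lambda>\<eta>. f (shift v \<eta>))
              - p_func N L t i j (\<rho>L L) (\<eta>0L L) f) \<longlonglongrightarrow> 0"
proof (rule Lim_null_comparison)
  let ?c = "2 * M * real (nat \<bar>fst v\<bar> + nat \<bar>snd v\<bar>) * real N"
  show "\<forall>\<^sub>F L in sequentially. norm (p_func N L t i j (\<rho>L L) (\<eta>0L L) (\<lambda>\<eta>. f (shift v \<eta>))
      - p_func N L t i j (\<rho>L L) (\<eta>0L L) f) \<le> ?c / real L"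
    using assms(1) eventually_ge_at_top[of 1]
    by eventually_elim (use abs_p_func_shift_diff_le[OF assms(2-4)] assms(5) in auto)
  show "(\<lambda>L. ?c / real L) \<longlonglongrightarrow> 0"
    by (rule lim_const_over_n)
qed

lemma measure_shift_cylinder_eq:
  assumes wlp: "weak_limit_point N t i j \<rho>L \<eta>0L \<mu>"
    and \<eta>0L: "\<forall>\<^sub>F L in sequentially. \<eta>0L L \<in> Omega_L L (\<rho>L L)"
    and "t > 0" "N \<ge> 1" "i \<ge> 1" and J: "finite J"
  shows "measure \<mu> (shift v -` cylinder J F) = measure \<mu> (cylinder J F)"
proof -
  have \<mu>: "prob_space \<mu>" "sets \<mu> = sets borel" "emeasure \<mu> Omega = 1"
    using wlp unfolding weak_limit_point_def by blast+
  obtain Ls where Ls: "strict_mono Ls" and lim: "\<And>f. continuous_on Omega f \<Longrightarrow> bounded (f ` Omega) \<Longrightarrow>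
      (\<lambda>k. p_func N (Ls k) t i j (\<rho>L (Ls k)) (\<eta>0L (Ls k)) f) \<longlonglongrightarrow> (\<integral>x. indicator Omega x * f x \<partial>\<mu>)"
    using wlp unfolding weak_limit_point_def by blast
  let ?C = "cylinder J F" and ?p = "\<lambda>k f. p_func N (Ls k) t i j (\<rho>L (Ls k)) (\<eta>0L (Ls k)) f"
  have "open ?C" "open (shift v -` ?C)"
    using open_cylinder[OF J] by (auto intro: open_vimage continuous_on_shift)
  then have C: "?C \<in> sets \<mu>" "shift v -` ?C \<in> sets \<mu>"
    using \<mu>(2) by simp_all
  have bounded: "bounded (indicator S ` Omega :: real set)" for S :: "config set"
    by (rule bounded_subset[of "{0, 1}"]) (auto simp: indicator_def)
  have shifted: "(\<lambda>\<eta>. indicator ?C (shift v \<eta>)) = indicator (shift v -` ?C)"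
    by (simp add: indicator_vimage fun_eq_iff)
  have continuous: "continuous_on Omega (indicator (shift v -` ?C) :: config \<Rightarrow> real)"
    unfolding shifted[symmetric]
    by (rule continuous_on_compose2[OF continuous_on_indicator_cylinder[OF J] continuous_on_shift]) auto
  have "(\<lambda>k. ?p k (indicator (shift v -` ?C))) \<longlonglongrightarrow> measure \<mu> (shift v -` ?C)"
    using lim[OF continuous bounded] unfolding integral_indicator_Omega_mult[OF \<mu>(1,3) C(2)] .
  moreover have "(\<lambda>k. ?p k (indicator ?C)) \<longlonglongrightarrow> measure \<mu> ?C"
    using lim[OF continuous_on_indicator_cylinder[OF J, of _ F] bounded]
    unfolding integral_indicator_Omega_mult[OF \<mu>(1,3) C(1)] .
  ultimately have measure_diff: "(\<lambda>k. ?p k (indicator (shift v -` ?C)) - ?p k (indicator ?C))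
      \<longlonglongrightarrow> measure \<mu> (shift v -` ?C) - measure \<mu> ?C"
    by (rule tendsto_diff)
  have "\<bar>indicator ?C \<eta> :: real\<bar> \<le> 1" for \<eta>
    by (simp add: indicator_def)
  from p_func_shift_diff_tendsto_zero[OF \<eta>0L assms(3-5) this]
  have "(\<lambda>k. ?p k (\<lambda>\<eta>. indicator ?C (shift v \<eta>)) - ?p k (indicator ?C)) \<longlonglongrightarrow> 0"
    by (rule LIMSEQ_subseq_LIMSEQ[OF _ Ls, unfolded o_def])
  then have "measure \<mu> (shift v -` ?C) - measure \<mu> ?C = 0"
    unfolding shifted by (rule LIMSEQ_unique[OF measure_diff])
  then show ?thesis by simp
qed

theorem lemma3:
  fixes \<rho>L :: "nat \<Rightarrow> real \<times> real" and \<rho> :: "real \<times> real"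
    and \<eta>0L :: "nat \<Rightarrow> config" and A :: "(real \<times> real) set"
    and \<psi>0 :: "real \<times> real \<Rightarrow> real"
    and t :: real and N i :: nat and j :: "nat \<times> nat" and \<mu> :: "config measure"
  assumes setting_L: "\<forall>\<^sub>F L in sequentially.
        \<rho>L L \<in> Tri \<and> real L * fst (\<rho>L L) \<in> \<nat> \<and> real L * snd (\<rho>L L) \<in> \<nat> \<and>
        \<eta>0L L \<in> Omega_L L (\<rho>L L)"
    and rho_lim: "\<rho>L \<longlonglongrightarrow> \<rho>" and rho_Tri: "\<rho> \<in> Tri"
    and A: "compact A" "convex A" "A \<subseteq> Tri"
    and psi_C2: "C2 \<psi>0"
    and psi_per: "\<forall>x y. \<psi>0 (x + 1, y) = \<psi>0 (x, y) \<and> \<psi>0 (x, y + 1) = \<psi>0 (x, y)"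
    and psi_0: "\<psi>0 (0, 0) = 0"
    and psi_slope: "\<forall>x. grad \<psi>0 x + \<rho> \<in> A"
    and height_lim: "\<forall>x \<in> {0..1}. \<forall>y \<in> {0..1}. (\<lambda>L. height (\<rho>L L) (\<eta>0L L) (\<lfloor>x * real L\<rfloor>, \<lfloor>y * real L\<rfloor>) / real L)
                              \<longlonglongrightarrow> \<psi>0 (x, y)"
    and t_pos: "t > 0" and N_pos: "N \<ge> 1" and ij: "(i, j) \<in> index_set N"
    and wlp: "weak_limit_point N t i j \<rho>L \<eta>0L \<mu>"
  shows "translation_invariant \<mu>"
proof (rule translation_invariant_if_cylinders)
  show "sets \<mu> = sets borel" "prob_space \<mu>"
    using wlp unfolding weak_limit_point_def by blast+
  have "\<forall>\<^sub>F L in sequentially. \<eta>0L L \<in> Omega_L L (\<rho>L L)"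
    using setting_L by (rule eventually_mono) simp
  moreover have "i \<ge> 1" using ij by (simp add: index_set_def)
  ultimately show "measure \<mu> (shift v -` cylinder J F) = measure \<mu> (cylinder J F)" if "finite J" for J F v
    using measure_shift_cylinder_eq[OF wlp _ t_pos N_pos _ that] by blast
qed

end
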